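(* The relation $\longrightarrow_\beta^\infty$ on $\Lambda^{001}$ satisfies: (1) it is reflexive; (2) ${\longrightarrow_\beta^*} \subseteq {\longrightarrow_\beta^\infty}$; (3) it is transitive: if $M \longrightarrow_\beta^\infty M'$ and $M' \longrightarrow_\beta^\infty M''$, then $M \longrightarrow_\beta^\infty M''$.
   Context: Fix a set $\mathcal V$ of variables. A 001-infinitary λ-term is a possibly infinite tree built from variables $x\in\mathcal V$ (leaves), abstractions $\lambda x.M$ (unary nodes) and applications $(M)N$ (binary nodes, $M$ the function and $N$ the argument), such that every infinite branch of the tree enters infinitely often the argument position $N$ of an application node. Equivalently, $\Lambda^{001}=\nu Y.\mu X.(\mathcal V+\lambda\mathcal V.X+(X)Y)$. Terms are taken up to α-equivalence, and it is assumed that fresh variables are always available (e.g. every subterm has finitely many free variables). Capture-avoiding substitution $M[N/x]$ is defined corecursively by $x[N/x]=N$, $y[N/x]=y$ for $y\ne x$, $(\lambda y.M)[N/x]=\lambda y.M[N/x]$ with $y$ fresh, and $((M)M')[N/x]=(M[N/x])M'[N/x]$. One-step β-reduction $\longrightarrow_\beta$ is the contextual closure (under abstractions and on both sides of applications, each step having a finite derivation) of $(\lambda x.M)N\longrightarrow_\beta M[N/x]$; $\longrightarrow_\beta^*$ is its reflexive-transitive closure. The infinitary reduction $\longrightarrow_\beta^\infty\subseteq\Lambda^{001}\times\Lambda^{001}$ is defined by the following rules, where derivations may be infinite (non-well-founded) provided every infinite branch of a derivation passes infinitely often through the third premise of rule (@): (var) if $M\longrightarrow_\beta^* x$ then $M\longrightarrow_\beta^\infty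 x$; (λ) if $M\longrightarrow_\beta^*\lambda x.P$ and $P\longrightarrow_\beta^\infty P'$ then $M\longrightarrow_\beta^\infty\lambda x.P'$; (@) if $M\longrightarrow_\beta^*(P)Q$, $P\longrightarrow_\beta^\infty P'$ and $Q\longrightarrow_\beta^\infty Q'$ then $M\longrightarrow_\beta^\infty (P')Q'$. *)

theory Defs
  imports Main
begin

text \<open>Possibly infinite lambda-terms, represented with de Bruijn indices
  (so that terms are automatically taken up to alpha-equivalence).\<close>

codatatype lterm = LVar nat | LLam lterm | LApp lterm lterm

text \<open>The 001 condition: \<nu>Y.\<mu>X.(V + \<lambda>V.X + (X)Y).
  The inner least fixed point: a finite spine of abstractions and
  function positions, whose argument subterms satisfy P.\<close>

inductive spine :: "(lterm \<Rightarrow> bool) \<Rightarrow> lterm \<Rightarrow> bool" for P where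
  spine_var: "spine P (LVar x)"
| spine_lam: "spine P M \<Longrightarrow> spine P (LLam M)"
| spine_app: "spine P M \<Longrightarrow> P N \<Longrightarrow> spine P (LApp M N)"

lemma spine_mono[mono]: "(\<And>x. P x \<longrightarrow> Q x) \<Longrightarrow> spine P t \<longrightarrow> spine Q t"
proof
  assume h: "\<And>x. P x \<longrightarrow> Q x" and "spine P t"
  from \<open>spine P t\<close> show "spine Q t" by (induction rule: spine.induct) (auto intro: spine.intros h[rule_format])
qed

coinductive wf001 :: "lterm \<Rightarrow> bool" where
  "spine wf001 M \<Longrightarrow> wf001 M"

primcorec lift :: "nat \<Rightarrow> lterm \<Rightarrow> lterm" where
  "lift k t = (case t of
      LVar i \<Rightarrow> LVar (if i < k then i else Suc i)
    | LLam M \<Rightarrow> LLam (lift (Suc k) M)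
    | LApp M N \<Rightarrow> LApp (lift k M) (lift k N))"

text \<open>\<open>subst k s t\<close> replaces index k in t by s (and decrements the larger
  free indices); it is t[s/k].\<close>

primcorec subst :: "nat \<Rightarrow> lterm \<Rightarrow> lterm \<Rightarrow> lterm" where
  "subst k s t = (case t of
      LVar i \<Rightarrow> (if i < k then LVar i
                 else if i = k then (case s of LVar j \<Rightarrow> LVar j | LLam b \<Rightarrow> LLam b
                                     | LApp a b \<Rightarrow> LApp a b)
                 else LVar (i - 1))
    | LLam M \<Rightarrow> LLam (subst (Suc k) (lift 0 s) M)
    | LApp M N \<Rightarrow> LApp (subst k s M) (subst k s N))"

inductive beta :: "lterm \<Rightarrow> lterm \<Rightarrow> bool" where
  beta_redex: "beta (LApp (LLam M) N) (subst 0 N M)"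
| beta_lam: "beta M M' \<Longrightarrow> beta (LLam M) (LLam M')"
| beta_appL: "beta M M' \<Longrightarrow> beta (LApp M N) (LApp M' N)"
| beta_appR: "beta N N' \<Longrightarrow> beta (LApp M N) (LApp M N')"

abbreviation beta_star :: "lterm \<Rightarrow> lterm \<Rightarrow> bool" where
  "beta_star \<equiv> beta\<^sup>*\<^sup>*"

text \<open>Infinitary reduction: \<nu>Y.\<mu>X. rules, where the third premise of (@)
  refers to the coinductive Y and all other recursive premises to the
  inductive X.\<close>

inductive ired_step :: "(lterm \<Rightarrow> lterm \<Rightarrow> bool) \<Rightarrow> lterm \<Rightarrow> lterm \<Rightarrow> bool" for R where
  ired_var: "beta_star M (LVar x) \<Longrightarrow> ired_step R M (LVar x)"
| ired_lam: "beta_star M (LLam P) \<Longrightarrow> ired_step R P P' \<Longrightarrow> ired_step R M (LLam P')"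
| ired_app: "beta_star M (LApp P Q) \<Longrightarrow> ired_step R P P' \<Longrightarrow> R Q Q'
             \<Longrightarrow> ired_step R M (LApp P' Q')"

lemma ired_step_mono[mono]:
  "(\<And>x y. R x y \<longrightarrow> S x y) \<Longrightarrow> ired_step R a b \<longrightarrow> ired_step S a b"
proof
  assume h: "\<And>x y. R x y \<longrightarrow> S x y" and "ired_step R a b"
  from \<open>ired_step R a b\<close> show "ired_step S a b" by (induction rule: ired_step.induct) (auto intro: ired_step.intros h[rule_format])
qed

coinductive ired :: "lterm \<Rightarrow> lterm \<Rightarrow> bool" where
  "ired_step ired M M' \<Longrightarrow> ired M M'"

end

theory Submission
  imports Defs
begin

text \<open>Reflexivity is a coinduction on \<open>ired\<close> guided by the 001 condition. For transitivity the
  essential fact is that \<open>ired\<close> absorbs finite \<open>\<beta>\<close>-reductions on both sides: on the left this is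
  immediate from the rules, while appending a \<open>\<beta>\<close>-step on the right goes by induction on the step,
  and a contracted redex \<open>(\<lambda>P)Q \<rightarrow> P[Q/0]\<close> is matched by \<open>ired (P\<^sub>1[Q\<^sub>1/0]) (P[Q/0])\<close>, i.e. by the
  compatibility of \<open>ired\<close> with substitution. Given this, \<open>ired M M'\<close> and \<open>ired M' M''\<close> compose
  coinductively: the head reduction of \<open>M'\<close> in the second derivation is absorbed by the first.\<close>

lemma lift_simps [simp]:
  "lift k (LVar i) = LVar (if i < k then i else Suc i)"
  "lift k (LLam M) = LLam (lift (Suc k) M)"
  "lift k (LApp M N) = LApp (lift k M) (lift k N)"
  by (subst lift.code; simp)+

lemma subst_simps [simp]:
  "subst k s (LVar i) = (if i < k then LVar i else if i = k then s else LVar (i - 1))"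
  "subst k s (LLam M) = LLam (subst (Suc k) (lift 0 s) M)"
  "subst k s (LApp M N) = LApp (subst k s M) (subst k s N)"
  by (subst subst.code; simp split: lterm.split)+

definition lterm_bisim_step :: "(lterm \<Rightarrow> lterm \<Rightarrow> bool) \<Rightarrow> lterm \<Rightarrow> lterm \<Rightarrow> bool" where
  "lterm_bisim_step R x y \<longleftrightarrow>
     x = y
   \<or> (\<exists>a b. x = LLam a \<and> y = LLam b \<and> (R a b \<or> a = b))
   \<or> (\<exists>a b c d. x = LApp a c \<and> y = LApp b d \<and> (R a b \<or> a = b) \<and> (R c d \<or> c = d))"

lemma lterm_coinduct_upto_eq [consumes 1]:
  assumes "R x y" and "\<And>x y. R x y \<Longrightarrow> lterm_bisim_step R x y"
  shows "x = y"
  using assms(1)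
proof (coinduction arbitrary: x y rule: lterm.coinduct_strong)
  case (Eq_lterm u v)
  then show ?case using assms(2)[OF Eq_lterm] unfolding lterm_bisim_step_def by auto
qed

lemma lift_lift: "i \<le> j \<Longrightarrow> lift i (lift j N) = lift (Suc j) (lift i N)"
proof (coinduction arbitrary: i j N rule: lterm_coinduct_upto_eq)
  case 1
  then show ?case by (cases N) (auto simp: lterm_bisim_step_def)
qed

lemma subst_lift: "subst j s (lift j t) = t"
proof (coinduction arbitrary: j s t rule: lterm_coinduct_upto_eq)
  case 1
  then show ?case by (cases t) (auto simp: lterm_bisim_step_def)
qed

lemma lift_subst_below: "i \<le> k \<Longrightarrow> lift i (subst k N Q) = subst (Suc k) (lift i N) (lift i Q)"
proof (coinduction arbitrary: i k N Q rule: lterm_coinduct_upto_eq)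
  case 1
  then show ?case by (cases Q) (auto simp: lterm_bisim_step_def lift_lift)
qed

lemma lift_subst_above: "j \<le> k \<Longrightarrow> lift k (subst j N M) = subst j (lift k N) (lift (Suc k) M)"
proof (coinduction arbitrary: j k N M rule: lterm_coinduct_upto_eq)
  case 1
  then show ?case by (cases M) (auto simp: lterm_bisim_step_def lift_lift)
qed

lemma subst_subst:
  "j \<le> k \<Longrightarrow> subst k N (subst j Q P) = subst j (subst k N Q) (subst (Suc k) (lift j N) P)"
proof (coinduction arbitrary: j k N Q P rule: lterm_coinduct_upto_eq)
  case 1
  then show ?case
    by (cases P) (auto simp: lterm_bisim_step_def lift_lift subst_lift lift_subst_below, blast)
qed

lemma beta_lift: "beta M N \<Longrightarrow> beta (lift k M) (lift k N)"
proof (induction arbitrary: k rule: beta.induct)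
  case (beta_redex M N)
  then show ?case using beta.beta_redex[of "lift (Suc k) M" "lift k N"]
    by (simp add: lift_subst_above)
qed (auto intro: beta.intros)

lemma beta_subst: "beta M M' \<Longrightarrow> beta (subst k N M) (subst k N M')"
proof (induction arbitrary: k N rule: beta.induct)
  case (beta_redex P Q)
  then show ?case using beta.beta_redex[of "subst (Suc k) (lift 0 N) P" "subst k N Q"]
    by (simp add: subst_subst)
qed (auto intro: beta.intros)

lemma rtranclp_map:
  assumes "\<And>x y. r x y \<Longrightarrow> s (f x) (f y)" and "r\<^sup>*\<^sup>* x y"
  shows "s\<^sup>*\<^sup>* (f x) (f y)"
  using assms(2) by induction (auto intro: rtranclp.rtrancl_into_rtrancl assms(1))

lemma beta_star_lift: "beta_star M N \<Longrightarrow> beta_star (lift k M) (lift k N)"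
  by (rule rtranclp_map[where f = "lift k"]) (rule beta_lift)

lemma beta_star_subst: "beta_star M N \<Longrightarrow> beta_star (subst k S M) (subst k S N)"
  by (rule rtranclp_map[where f = "subst k S"]) (rule beta_subst)

lemma beta_star_LApp_left: "beta_star M N \<Longrightarrow> beta_star (LApp M Q) (LApp N Q)"
  by (rule rtranclp_map[where f = "\<lambda>M. LApp M Q"]) (rule beta_appL)

lemma ired_unfold: "ired M N \<longleftrightarrow> ired_step ired M N"
  by (subst ired.simps) simp

lemma ired_step_prepend_beta_star: "beta_star M N \<Longrightarrow> ired_step R N N' \<Longrightarrow> ired_step R M N'"
  by (erule ired_step.cases) (auto intro: ired_step.intros rtranclp_trans)

lemma ired_prepend_beta_star: "beta_star M N \<Longrightarrow> ired N N' \<Longrightarrow> ired M N'"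
  using ired_step_prepend_beta_star ired_unfold by blast

lemma ired_LLamI: "beta_star M (LLam P) \<Longrightarrow> ired P P' \<Longrightarrow> ired M (LLam P')"
  by (simp add: ired_unfold[of M] ired_unfold[of P] ired_step.ired_lam)

lemma ired_LAppI: "beta_star M (LApp P Q) \<Longrightarrow> ired P P' \<Longrightarrow> ired Q Q' \<Longrightarrow> ired M (LApp P' Q')"
  by (simp add: ired_unfold[of M] ired_unfold[of P] ired_step.ired_app)

lemma ired_LVarD: "ired M (LVar x) \<Longrightarrow> beta_star M (LVar x)"
  by (subst (asm) ired_unfold) (erule ired_step.cases, auto)

lemma ired_LLamE:
  assumes "ired M (LLam P')"
  obtains P where "beta_star M (LLam P)" and "ired P P'"
  using assms by (subst (asm) ired_unfold) (erule ired_step.cases, auto simp: ired_unfold)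

lemma ired_LAppE:
  assumes "ired M (LApp P' Q')"
  obtains P Q where "beta_star M (LApp P Q)" and "ired P P'" and "ired Q Q'"
  using assms by (subst (asm) ired_unfold) (erule ired_step.cases, auto simp: ired_unfold)

lemma ired_lift: "ired M M' \<Longrightarrow> ired (lift k M) (lift k M')"
proof (coinduction arbitrary: k M M' rule: ired.coinduct)
  case (ired k M M')
  from ired have "ired_step ired M M'" by (simp add: ired_unfold)
  then have "ired_step (\<lambda>a b. (\<exists>k M M'. a = lift k M \<and> b = lift k M' \<and> ired M M') \<or> ired a b)
      (lift k M) (lift k M')"
  proof (induction arbitrary: k rule: ired_step.induct)
    case (ired_var M x)
    then show ?case using beta_star_lift[OF ired_var, of k] by (auto intro: ired_step.intros)
  next
    case (ired_lam M P P')
    then show ?case using beta_star_lift[OF ired_lam(1), of k] by (auto intro: ired_step.intros)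
  next
    case (ired_app M P Q P' Q')
    then show ?case using beta_star_lift[OF ired_app(1), of k] by (auto intro!: ired_step.ired_app)
  qed
  then show ?case by blast
qed

lemma ired_subst: "ired M M' \<Longrightarrow> ired N N' \<Longrightarrow> ired (subst k N M) (subst k N' M')"
proof (coinduction arbitrary: k M M' N N' rule: ired.coinduct)
  case (ired k M M' N N')
  let ?R = "\<lambda>a b. (\<exists>k M M' N N'. a = subst k N M \<and> b = subst k N' M' \<and> ired M M' \<and> ired N N')
    \<or> ired a b"
  from ired have "ired_step ired M M'" by (simp add: ired_unfold)
  then have "ired_step ?R (subst k N M) (subst k N' M')"
    using ired(2)
  proof (induction arbitrary: k N N' rule: ired_step.induct)
    case (ired_var M x)
    have M_red: "beta_star (subst k N M) (subst k N (LVar x))"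
      using beta_star_subst[OF ired_var(1)] .
    show ?case
    proof (cases "x = k")
      case True
      have "ired_step ired N N'" using ired_var(2) by (simp add: ired_unfold)
      then have "ired_step ?R N N'" by (rule ired_step_mono[rule_format, rotated]) simp
      then show ?thesis using M_red True by (auto intro: ired_step_prepend_beta_star)
    next
      case False
      then show ?thesis using M_red by (auto intro: ired_step.intros)
    qed
  next
    case (ired_lam M P P')
    have "ired (lift 0 N) (lift 0 N')" using ired_lam(4) by (rule ired_lift)
    then have "ired_step ?R (subst (Suc k) (lift 0 N) P) (subst (Suc k) (lift 0 N') P')"
      by (rule ired_lam(3))
    then show ?case using beta_star_subst[OF ired_lam(1), of k N] by (auto intro: ired_step.intros)
  next
    case (ired_app M P Q P' Q')
    have "beta_star (subst k N M) (LApp (subst k N P) (subst k N Q))"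
      using beta_star_subst[OF ired_app(1), of k N] by simp
    moreover have "ired_step ?R (subst k N P) (subst k N' P')"
      using ired_app.IH ired_app.prems .
    moreover have "?R (subst k N Q) (subst k N' Q')"
      using ired_app.hyps(3) ired_app.prems by blast
    ultimately show ?case by (simp add: ired_step.ired_app)
  qed
  then show ?case by blast
qed

lemma ired_append_beta: "beta M' M'' \<Longrightarrow> ired M M' \<Longrightarrow> ired M M''"
proof (induction arbitrary: M rule: beta.induct)
  case (beta_redex P' Q')
  from beta_redex obtain P1 Q1 where M_red: "beta_star M (LApp P1 Q1)"
    and P1: "ired P1 (LLam P')" and Q1: "ired Q1 Q'"
    by (rule ired_LAppE)
  from P1 obtain P2 where P1_red: "beta_star P1 (LLam P2)" and P2: "ired P2 P'"
    by (rule ired_LLamE)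
  have "beta_star M (LApp (LLam P2) Q1)"
    using M_red beta_star_LApp_left[OF P1_red] by (rule rtranclp_trans)
  then have "beta_star M (subst 0 Q1 P2)"
    by (rule rtranclp.rtrancl_into_rtrancl) (rule beta.beta_redex)
  moreover have "ired (subst 0 Q1 P2) (subst 0 Q' P')" using P2 Q1 by (rule ired_subst)
  ultimately show ?case by (rule ired_prepend_beta_star)
next
  case (beta_lam N N'')
  from beta_lam.prems obtain P where "beta_star M (LLam P)" and "ired P N" by (rule ired_LLamE)
  with beta_lam.IH show ?case by (blast intro: ired_LLamI)
next
  case (beta_appL P P'' Q)
  from beta_appL.prems obtain P1 Q1 where "beta_star M (LApp P1 Q1)" and "ired P1 P" and "ired Q1 Q"
    by (rule ired_LAppE)
  with beta_appL.IH show ?case by (blast intro: ired_LAppI)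
next
  case (beta_appR Q Q'' P)
  from beta_appR.prems obtain P1 Q1 where "beta_star M (LApp P1 Q1)" and "ired P1 P" and "ired Q1 Q"
    by (rule ired_LAppE)
  with beta_appR.IH show ?case by (blast intro: ired_LAppI)
qed

lemma ired_append_beta_star: "beta_star M' M'' \<Longrightarrow> ired M M' \<Longrightarrow> ired M M''"
  by (induction rule: rtranclp_induct) (auto intro: ired_append_beta)

lemma ired_refl: "wf001 M \<Longrightarrow> ired M M"
proof (coinduction arbitrary: M rule: ired.coinduct)
  case (ired M)
  from ired have "spine wf001 M" by (cases rule: wf001.cases) auto
  then have "ired_step (\<lambda>a b. (\<exists>M. a = M \<and> b = M \<and> wf001 M) \<or> ired a b) M M"
    by (induction rule: spine.induct) (auto intro: ired_step.intros)
  then show ?case by blast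
qed

lemma ired_trans: "ired A B \<Longrightarrow> ired B C \<Longrightarrow> ired A C"
proof (coinduction arbitrary: A B C rule: ired.coinduct)
  case (ired A B C)
  from ired(2) have "ired_step ired B C" by (simp add: ired_unfold)
  then have "ired_step (\<lambda>a c. (\<exists>A B C. a = A \<and> c = C \<and> ired A B \<and> ired B C) \<or> ired a c) A C"
    using ired(1)
  proof (induction arbitrary: A rule: ired_step.induct)
    case (ired_var M x)
    then have "ired A (LVar x)" using ired_append_beta_star by blast
    then show ?case by (auto dest: ired_LVarD intro: ired_step.intros)
  next
    case (ired_lam M P P')
    then have "ired A (LLam P)" using ired_append_beta_star by blast
    then obtain P1 where "beta_star A (LLam P1)" and "ired P1 P" by (rule ired_LLamE)
    with ired_lam.IH show ?case by (auto intro: ired_step.intros)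
  next
    case (ired_app M P Q P' Q')
    then have "ired A (LApp P Q)" using ired_append_beta_star by blast
    then obtain P1 Q1 where "beta_star A (LApp P1 Q1)" and "ired P1 P" and "ired Q1 Q"
      by (rule ired_LAppE)
    with ired_app.IH ired_app.hyps(3) show ?case by (auto intro!: ired_step.ired_app)
  qed
  then show ?case by blast
qed

theorem mainTheorem1:
  shows "(\<forall>M. wf001 M \<longrightarrow> ired M M)
       \<and> (\<forall>M N. wf001 M \<longrightarrow> wf001 N \<longrightarrow> beta_star M N \<longrightarrow> ired M N)
       \<and> (\<forall>M M' M''. wf001 M \<longrightarrow> wf001 M' \<longrightarrow> wf001 M'' \<longrightarrow>
            ired M M' \<longrightarrow> ired M' M'' \<longrightarrow> ired M M'')"
  using ired_refl ired_prepend_beta_star ired_trans by blast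

end
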